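(* Let $m\in\mathbb{Z}_{>0}$ and $n\in\mathbb{Z}_{\ge 0}$ with $m\geq n$, and let $\psi=\psi_{m,n}:\mathcal{G}^{(m,n)}\to\mathbb{C}$ be a Whittaker function. If $\psi(I_{m+n-1})\,\psi(J_{m+n-1})\neq 0$, then the induced module $W'=\mathrm{Ind}_{\mathcal{G}^{(m,n)}}^{\mathcal{G}^{(m,0)}}\mathbb{C}w_{\psi}=\mathcal{U}(\mathcal{G}^{(m,0)})\otimes_{\mathcal{U}(\mathcal{G}^{(m,n)})}\mathbb{C}w_\psi$ is an irreducible $\mathcal{G}^{(m,0)}$-module. Moreover, for all $w\in W'$ and all $i\in\mathbb{Z}_{\ge0}$, $$L_{m+n+i}w=\psi(L_{m+n+i})w,\quad H_{m+n+i}w=\psi(H_{m+n+i})w,\quad I_{n+i}w=\psi(I_{n+i})w,\quad J_{n+i}w=\psi(J_{n+i})w.$$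
   Context: $\mathcal{G}$ is the complex Lie algebra with basis $\{L_n,H_n,I_n,J_n,\mathbf{c}_1,\mathbf{c}_2,\mathbf{c}_3: n\in\mathbb{Z}\}$ whose brackets of basis elements are $[L_m,L_n]=(n-m)L_{m+n}+\frac{m^3-m}{12}\delta_{m+n,0}\mathbf{c}_1$, $[L_m,H_n]=nH_{m+n}+m^2\delta_{m+n,0}\mathbf{c}_2$, $[H_m,H_n]=m\delta_{m+n,0}\mathbf{c}_3$, $[L_m,I_n]=(n-m)I_{m+n}$, $[L_m,J_n]=(n-m)J_{m+n}$, $[H_m,I_n]=I_{m+n}$, $[H_m,J_n]=-J_{m+n}$ (and the antisymmetric counterparts), all other brackets of basis elements being zero (so $\mathbf{c}_1,\mathbf{c}_2,\mathbf{c}_3$ are central and the $I$'s and $J$'s commute among themselves). For $m,n\in\mathbb{Z}_{\ge0}$ let $\mathcal{G}^{(m,n)}=\sum_{i\ge0}(\mathbb{C}L_{m+i}+\mathbb{C}H_{m+i}+\mathbb{C}I_{n+i}+\mathbb{C}J_{n+i})+\mathbb{C}\mathbf{c}_1+\mathbb{C}\mathbf{c}_2+\mathbb{C}\mathbf{c}_3$, a subalgebra. A Whittaker function $\psi_{m,n}$ is a Lie algebra homomorphism $\mathcal{G}^{(m,n)}\to\mathbb{C}$ (i.e. a linear map vanishing on $[\mathcal{G}^{(m,n)},\mathcal{G}^{(m,n)}]$); $\mathbb{C}w_{\psi}$ denotes the one-dimensional $\mathcal{G}^{(m,n)}$-module with $x\cdot w_\psi=\psi(x)w_\psi$. *)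

theory Defs
  imports Complex_Main
begin

text \<open>Basis of the Lie algebra G: L_n, H_n, I_n, J_n (n integer) and central c1, c2, c3.\<close>
datatype gb = L int | H int | I int | J int | C1 | C2 | C3

text \<open>Bracket of two basis elements, as a formal linear combination (coefficient, basis element).\<close>
fun brk :: "gb \<Rightarrow> gb \<Rightarrow> (complex \<times> gb) list" where
  "brk (L a) (L b) = [(of_int (b - a), L (a + b))] @
      (if a + b = 0 then [(of_int (a^3 - a) / 12, C1)] else [])"
| "brk (L a) (H b) = [(of_int b, H (a + b))] @
      (if a + b = 0 then [(of_int (a^2), C2)] else [])"
| "brk (H a) (L b) = [(- of_int a, H (a + b))] @
      (if a + b = 0 then [(- of_int (b^2), C2)] else [])"
| "brk (H a) (H b) = (if a + b = 0 then [(of_int a, C3)] else [])"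
| "brk (L a) (I b) = [(of_int (b - a), I (a + b))]"
| "brk (I b) (L a) = [(- of_int (b - a), I (a + b))]"
| "brk (L a) (J b) = [(of_int (b - a), J (a + b))]"
| "brk (J b) (L a) = [(- of_int (b - a), J (a + b))]"
| "brk (H a) (I b) = [(1, I (a + b))]"
| "brk (I b) (H a) = [(-1, I (a + b))]"
| "brk (H a) (J b) = [(-1, J (a + b))]"
| "brk (J b) (H a) = [(1, J (a + b))]"
| "brk _ _ = []"

text \<open>Basis of the subalgebra G^(m,n).\<close>
definition gens :: "nat \<Rightarrow> nat \<Rightarrow> gb set" where
  "gens m n = {b. case b of L k \<Rightarrow> k \<ge> int m | H k \<Rightarrow> k \<ge> int m
                 | I k \<Rightarrow> k \<ge> int n | J k \<Rightarrow> k \<ge> int n | _ \<Rightarrow> True}"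

definition lin :: "(gb \<Rightarrow> complex) \<Rightarrow> (complex \<times> gb) list \<Rightarrow> complex" where
  "lin \<psi> xs = sum_list (map (\<lambda>(c, b). c * \<psi> b) xs)"

text \<open>Whittaker function on G^(m,n): given by its values on the basis of G^(m,n),
  its linear extension vanishes on [G^(m,n), G^(m,n)].\<close>
definition whittaker :: "nat \<Rightarrow> nat \<Rightarrow> (gb \<Rightarrow> complex) \<Rightarrow> bool" where
  "whittaker m n \<psi> \<longleftrightarrow> (\<forall>x\<in>gens m n. \<forall>y\<in>gens m n. lin \<psi> (brk x y) = 0)"

text \<open>Free associative algebra on the basis of G: functions from words to coefficients.\<close>
type_synonym fa = "gb list \<Rightarrow> complex"

definition mono :: "gb list \<Rightarrow> fa" where
  "mono w = (\<lambda>u. if u = w then 1 else 0)"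

definition fmul :: "fa \<Rightarrow> fa \<Rightarrow> fa" where
  "fmul p q = (\<lambda>u. \<Sum>k\<in>{0..length u}. p (take k u) * q (drop k u))"

definition emb :: "(complex \<times> gb) list \<Rightarrow> fa" where
  "emb xs = (\<lambda>u. sum_list (map (\<lambda>(c, b). if u = [b] then c else 0) xs))"

definition smul :: "complex \<Rightarrow> fa \<Rightarrow> fa" where
  "smul c p = (\<lambda>u. c * p u)"

definition fadd :: "fa \<Rightarrow> fa \<Rightarrow> fa" where
  "fadd p q = (\<lambda>u. p u + q u)"

definition fsub :: "fa \<Rightarrow> fa \<Rightarrow> fa" where
  "fsub p q = (\<lambda>u. p u - q u)"

inductive_set cspan :: "fa set \<Rightarrow> fa set" for S where
  zero: "(\<lambda>_. 0) \<in> cspan S"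
| base: "x \<in> S \<Longrightarrow> x \<in> cspan S"
| add: "x \<in> cspan S \<Longrightarrow> y \<in> cspan S \<Longrightarrow> fadd x y \<in> cspan S"
| scale: "x \<in> cspan S \<Longrightarrow> smul c x \<in> cspan S"

text \<open>Polynomials in the basis of G^(m,0) (the tensor algebra T(G^(m,0))).\<close>
definition talg :: "nat \<Rightarrow> fa set" where
  "talg m = {p. finite {w. p w \<noteq> 0} \<and> (\<forall>w. p w \<noteq> 0 \<longrightarrow> set w \<subseteq> gens m 0)}"

text \<open>Kernel of T(G^(m,0)) \<rightarrow> U(G^(m,0)) \<otimes>_{U(G^(m,n))} C w_psi:
  the two-sided ideal of the Lie relations plus the left ideal generated by x - psi(x), x in G^(m,n).\<close>
definition relel :: "gb \<Rightarrow> gb \<Rightarrow> fa" where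
  "relel x y = fsub (fsub (mono [x, y]) (mono [y, x])) (emb (brk x y))"

definition indker :: "nat \<Rightarrow> nat \<Rightarrow> (gb \<Rightarrow> complex) \<Rightarrow> fa set" where
  "indker m n \<psi> = cspan
     ({fmul (mono a) (fmul (relel x y) (mono b)) | a b x y.
         set a \<subseteq> gens m 0 \<and> set b \<subseteq> gens m 0 \<and> x \<in> gens m 0 \<and> y \<in> gens m 0}
    \<union> {fmul (mono a) (fsub (mono [x]) (smul (\<psi> x) (mono []))) | a x.
         set a \<subseteq> gens m 0 \<and> x \<in> gens m n})"

text \<open>The induced module W' is talg m / indker m n psi, with basis element x of G^(m,0)
  acting by left multiplication with mono [x].  Irreducibility: W' is nonzero and every
  G^(m,0)-submodule (= subspace S with indker \<subseteq> S \<subseteq> talg, stable under the action) is 0 or W'.\<close>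
definition induced_irreducible :: "nat \<Rightarrow> nat \<Rightarrow> (gb \<Rightarrow> complex) \<Rightarrow> bool" where
  "induced_irreducible m n \<psi> \<longleftrightarrow>
     indker m n \<psi> \<noteq> talg m \<and>
     (\<forall>S. indker m n \<psi> \<subseteq> S \<and> S \<subseteq> talg m \<and>
          (\<forall>p\<in>S. \<forall>q\<in>S. fadd p q \<in> S) \<and> (\<forall>p\<in>S. \<forall>c. smul c p \<in> S) \<and>
          (\<forall>x\<in>gens m 0. \<forall>p\<in>S. fmul (mono [x]) p \<in> S)
        \<longrightarrow> S = indker m n \<psi> \<or> S = talg m)"

text \<open>In W', x acts on the class of p as the scalar c.\<close>
definition acts_as :: "nat \<Rightarrow> nat \<Rightarrow> (gb \<Rightarrow> complex) \<Rightarrow> gb \<Rightarrow> complex \<Rightarrow> fa \<Rightarrow> bool" where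
  "acts_as m n \<psi> x c p \<longleftrightarrow> fsub (fmul (mono [x]) p) (smul c p) \<in> indker m n \<psi>"

end

theory Submission
  imports Defs "HOL-Library.Multiset"
begin

text \<open>
  Let V be spanned by the I_j, J_j with 0 \<le> j < n, an abelian complement of G^(m,n) in G^(m,0).
  Letting V act on S(V) by multiplication and x \<in> G^(m,n) by \<psi>(x) + \<Sum>_v \<psi>([x, v]) \<partial>_v gives a
  representation of G^(m,0) for which p \<mapsto> p \<cdot> 1 kills the defining relations of W', while
  straightening shows that every element of W' is congruent to a polynomial in V; so W' \<cong> S(V).
  The elements of G^(m+n,n) commute with V up to elements on which \<psi> vanishes, hence act by \<psi>.

  For irreducibility, let a submodule contain a nonzero polynomial f and let j be the least index
  of a variable of f. With a = m + n - 1 - j, \<alpha> = \<psi>(I_(m+n-1)) and \<beta> = \<psi>(J_(m+n-1)), H_a and L_a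
  act on f, up to scalars, by \<alpha> \<partial>_(I_j) - \<beta> \<partial>_(J_j) and (j - a)(\<alpha> \<partial>_(I_j) + \<beta> \<partial>_(J_j)). As
  \<alpha> \<beta> \<noteq> 0 and j \<noteq> a, both derivatives of f lie in the submodule; descending this way reaches a
  nonzero constant, so the submodule is everything.
\<close>

lemma fmul_mono_left:
  "fmul (mono a) q = (\<lambda>u. if take (length a) u = a then q (drop (length a) u) else 0)"
proof (rule ext)
  fix u
  show "fmul (mono a) q u = (if take (length a) u = a then q (drop (length a) u) else 0)"
  proof (cases "take (length a) u = a")
    case True
    then have "length (take (length a) u) = length a" by simp
    then have "length a \<le> length u" by simp
    have "fmul (mono a) q u = (\<Sum>k\<in>{0..length u}. if k = length a then q (drop k u) else 0)"
      unfolding fmul_def mono_def by (rule sum.cong) (use True in auto)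
    then show ?thesis
      using True \<open>length a \<le> length u\<close> by simp
  next
    case False
    have "fmul (mono a) q u = (\<Sum>k\<in>{0..length u}. 0)"
      unfolding fmul_def mono_def by (rule sum.cong) (use False in auto)
    then show ?thesis
      using False by simp
  qed
qed

lemma fmul_mono_Cons_apply [simp]:
  "fmul (mono [x]) p [] = 0"
  "fmul (mono [x]) p (y # u) = (if y = x then p u else 0)"
  by (simp_all add: fmul_mono_left)

lemma mono_Cons_apply [simp]:
  "mono (x # w) [] = 0"
  "mono (x # w) (y # v) = (if y = x then mono w v else 0)"
  by (simp_all add: mono_def)

lemma fmul_mono_mono: "fmul (mono a) (mono b) = mono (a @ b)"
  unfolding fmul_mono_left
  by (rule ext) (auto simp: mono_def append_eq_conv_conj, metis append_take_drop_id)

lemma fmul_mono_fmul_mono: "fmul (mono a) (fmul (mono b) p) = fmul (mono (a @ b)) p"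
proof -
  have "(if take (length a) u = a then if take (length b) (drop (length a) u) = b
          then p (drop (length b) (drop (length a) u)) else 0 else 0) =
        (if take (length (a @ b)) u = a @ b then p (drop (length (a @ b)) u) else 0)" for u
  proof (cases "take (length a) u = a")
    case True
    then show ?thesis by (simp add: take_add add.commute)
  next
    case False
    then have "take (length (a @ b)) u \<noteq> a @ b"
      by (metis append_eq_conv_conj take_take length_append le_add1 min_absorb1)
    then show ?thesis using False by simp
  qed
  then show ?thesis
    unfolding fmul_mono_left by (intro ext) simp
qed

lemma fmul_mono_fadd: "fmul (mono a) (fadd p q) = fadd (fmul (mono a) p) (fmul (mono a) q)"
  by (auto simp: fmul_mono_left fadd_def)

lemma fmul_mono_smul: "fmul (mono a) (smul c p) = smul c (fmul (mono a) p)"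
  by (auto simp: fmul_mono_left smul_def)

definition lincomb :: "(complex \<times> gb list) list \<Rightarrow> fa" where
  "lincomb ws = (\<lambda>u. \<Sum>(c, w)\<leftarrow>ws. c * mono w u)"

lemma lincomb_Nil [simp]: "lincomb [] = (\<lambda>_. 0)"
  by (simp add: lincomb_def)

lemma lincomb_Cons: "lincomb ((c, w) # ws) = (\<lambda>u. c * mono w u + lincomb ws u)"
  by (simp add: lincomb_def)

lemma lincomb_append: "lincomb (xs @ ys) = (\<lambda>u. lincomb xs u + lincomb ys u)"
  by (simp add: lincomb_def)

lemma sum_list_map_neg:
  "(\<Sum>(c, w)\<leftarrow>map (\<lambda>(c, \<beta>). (- c, h \<beta>)) xs. c * G w) = - (\<Sum>(c, \<beta>)\<leftarrow>xs. c * G (h \<beta>) :: complex)"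
  by (induction xs) auto

lemma lincomb_map_neg:
  "lincomb (map (\<lambda>(c, \<beta>). (- c, h \<beta>)) xs) u = - (\<Sum>(c, \<beta>)\<leftarrow>xs. c * mono (h \<beta>) u)"
  unfolding lincomb_def by (rule sum_list_map_neg)

lemma fmul_mono_lincomb: "fmul (mono a) (lincomb ws) = lincomb (map (\<lambda>(c, w). (c, a @ w)) ws)"
proof (induction ws)
  case Nil
  then show ?case by (simp add: fmul_mono_left)
next
  case (Cons cw ws)
  obtain c w where cw: "cw = (c, w)" by force
  have "fmul (mono a) (lincomb (cw # ws)) = (\<lambda>u. c * fmul (mono a) (mono w) u + fmul (mono a) (lincomb ws) u)"
    unfolding cw lincomb_Cons fmul_mono_left by auto
  then show ?case
    using Cons by (simp add: cw lincomb_Cons fmul_mono_mono)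
qed

lemma fmul_lincomb_mono: "fmul (lincomb ws) (mono b) = lincomb (map (\<lambda>(c, w). (c, w @ b)) ws)"
proof (induction ws)
  case Nil
  then show ?case by (simp add: fmul_def)
next
  case (Cons cw ws)
  obtain c w where cw: "cw = (c, w)" by force
  have "fmul (\<lambda>u. c * mono w u + lincomb ws u) (mono b) =
        (\<lambda>u. c * fmul (mono w) (mono b) u + fmul (lincomb ws) (mono b) u)"
    by (simp add: fmul_def distrib_right sum.distrib sum_distrib_left mult.assoc)
  then show ?case
    using Cons by (simp add: cw lincomb_Cons fmul_mono_mono)
qed

lemma fun_eq_sum_mono: "finite {w. p w \<noteq> 0} \<Longrightarrow> p u = (\<Sum>w | p w \<noteq> 0. p w * mono w u)"
  by (simp add: mono_def if_distrib[of "\<lambda>t. _ * t"] cong: if_cong)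

lemma fmul_mono_expand:
  assumes "finite {w. p w \<noteq> 0}"
  shows "fmul (mono [x]) p u = (\<Sum>w | p w \<noteq> 0. p w * mono (x # w) u)"
proof (cases u)
  case (Cons y v)
  then show ?thesis
    using fun_eq_sum_mono[OF assms, of v] by simp
qed simp

lemma finite_support_add:
  fixes p q :: "'a \<Rightarrow> 'b::comm_monoid_add"
  shows "finite {x. p x \<noteq> 0} \<Longrightarrow> finite {x. q x \<noteq> 0} \<Longrightarrow> finite {x. p x + q x \<noteq> 0}"
  by (rule finite_subset[of _ "{x. p x \<noteq> 0} \<union> {x. q x \<noteq> 0}"]) auto

lemma finite_support_scale:
  fixes p :: "'a \<Rightarrow> 'b::mult_zero"
  shows "finite {x. p x \<noteq> 0} \<Longrightarrow> finite {x. c * p x \<noteq> 0}"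
  by (rule finite_subset[of _ "{x. p x \<noteq> 0}"]) auto

lemma finite_support_mono: "finite {u. mono w u \<noteq> 0}"
  by (simp add: mono_def)

lemma finite_support_lincomb: "finite {u. lincomb ws u \<noteq> 0}"
  by (induction ws) (auto simp: lincomb_Cons intro!: finite_support_add finite_support_scale finite_support_mono)

lemma relel_lincomb:
  "relel x y = lincomb ([(1, [x, y]), (-1, [y, x])] @ map (\<lambda>(c, b). (- c, [b])) (brk x y))"
proof -
  have "emb xs = lincomb (map (\<lambda>(c, b). (c, [b])) xs)" for xs
    by (rule ext, induction xs) (auto simp: emb_def lincomb_def mono_def)
  moreover have "lincomb (map (\<lambda>(c, b). (- c, [b])) xs) = (\<lambda>u. - lincomb (map (\<lambda>(c, b). (c, [b])) xs) u)" for xs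
    by (induction xs) (auto simp: lincomb_Cons)
  ultimately show ?thesis
    unfolding relel_def fsub_def lincomb_append by (simp add: lincomb_Cons)
qed

lemma relation_lincomb:
  "fmul (mono a) (fmul (relel x y) (mono b)) =
   lincomb ([(1, a @ x # y # b), (-1, a @ y # x # b)] @ map (\<lambda>(c, \<beta>). (- c, a @ \<beta> # b)) (brk x y))"
  unfolding relel_lincomb fmul_lincomb_mono fmul_mono_lincomb
  by (simp add: comp_def case_prod_unfold)

lemma whittaker_relation_lincomb:
  "fmul (mono a) (fsub (mono [x]) (smul c (mono []))) = lincomb [(1, a @ [x]), (- c, a)]"
  unfolding fmul_mono_left fsub_def smul_def
  by (rule ext) (auto simp: lincomb_Cons mono_def append_eq_conv_conj, (metis append_take_drop_id)+)

lemma sum_list_diff_lin: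
  "(\<Sum>(c, \<beta>)\<leftarrow>xs. c * (f \<beta> - \<psi> \<beta> * t)) = (\<Sum>(c, \<beta>)\<leftarrow>xs. c * f \<beta>) - lin \<psi> xs * t"
  by (induction xs) (auto simp: lin_def algebra_simps)

definition Vgens :: "nat \<Rightarrow> gb set" where
  "Vgens n = I ` {0..<int n} \<union> J ` {0..<int n}"

lemma Vgens_simps [simp]:
  "L k \<notin> Vgens n" "H k \<notin> Vgens n" "C1 \<notin> Vgens n" "C2 \<notin> Vgens n" "C3 \<notin> Vgens n"
  "I k \<in> Vgens n \<longleftrightarrow> 0 \<le> k \<and> k < int n" "J k \<in> Vgens n \<longleftrightarrow> 0 \<le> k \<and> k < int n"
  by (auto simp: Vgens_def)

lemma finite_Vgens [simp]: "finite (Vgens n)"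
  by (simp add: Vgens_def)

lemma gens_simps [simp]:
  "L k \<in> gens m n \<longleftrightarrow> int m \<le> k" "H k \<in> gens m n \<longleftrightarrow> int m \<le> k"
  "I k \<in> gens m n \<longleftrightarrow> int n \<le> k" "J k \<in> gens m n \<longleftrightarrow> int n \<le> k"
  "C1 \<in> gens m n" "C2 \<in> gens m n" "C3 \<in> gens m n"
  by (auto simp: gens_def)

lemma gens_antimono: "m \<le> m' \<Longrightarrow> n \<le> n' \<Longrightarrow> b \<in> gens m' n' \<Longrightarrow> b \<in> gens m n"
  by (cases b) auto

lemma Vgens_subset_gens: "b \<in> Vgens n \<Longrightarrow> b \<in> gens m 0"
  by (cases b) auto

lemma gens_0_iff: "b \<in> gens m 0 \<Longrightarrow> b \<in> gens m n \<longleftrightarrow> b \<notin> Vgens n"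
  by (cases b) auto

lemma brk_Vgens: "x \<in> Vgens n \<Longrightarrow> y \<in> Vgens n \<Longrightarrow> brk x y = []"
  by (cases x; cases y) auto

lemma lin_brk_antisym: "lin \<psi> (brk x y) = - lin \<psi> (brk y x)"
  by (cases x; cases y)
    (auto simp: lin_def algebra_simps power3_eq_cube power2_eq_square add_eq_0_iff, simp add: field_simps)

section \<open>The defining relations of the induced module\<close>

locale induced_data =
  fixes m n :: nat and \<psi> :: "gb \<Rightarrow> complex"
begin

abbreviation K where "K \<equiv> indker m n \<psi>"

lemma K_zero: "(\<lambda>_. 0) \<in> K"
  unfolding indker_def by (rule cspan.zero)

lemma K_add: "p \<in> K \<Longrightarrow> q \<in> K \<Longrightarrow> (\<lambda>u. p u + q u) \<in> K"
  using cspan.add[of p _ q] unfolding indker_def fadd_def by blast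

lemma K_scale: "p \<in> K \<Longrightarrow> (\<lambda>u. c * p u) \<in> K"
  using cspan.scale[of p _ c] unfolding indker_def smul_def by blast

lemma K_diff: "p \<in> K \<Longrightarrow> q \<in> K \<Longrightarrow> (\<lambda>u. p u - q u) \<in> K"
  using K_add[OF _ K_scale[of q "-1"], of p] by simp

lemma K_sum: "finite A \<Longrightarrow> (\<And>i. i \<in> A \<Longrightarrow> f i \<in> K) \<Longrightarrow> (\<lambda>u. \<Sum>i\<in>A. c i * f i u) \<in> K"
proof (induction A rule: finite_induct)
  case (insert i A)
  then show ?case
    using K_add[OF K_scale[of "f i" "c i"]] by simp
qed (simp add: K_zero)

lemma K_sum_list:
  "(\<And>c \<beta>. (c, \<beta>) \<in> set xs \<Longrightarrow> F \<beta> \<in> K) \<Longrightarrow> (\<lambda>u. \<Sum>(c, \<beta>)\<leftarrow>xs. c * F \<beta> u) \<in> K"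
proof (induction xs)
  case (Cons cb xs)
  obtain c \<beta> where cb: "cb = (c, \<beta>)" by force
  have "F \<beta> \<in> K" and "(\<lambda>u. \<Sum>(c, \<beta>)\<leftarrow>xs. c * F \<beta> u) \<in> K"
    using Cons cb by auto
  then show ?case
    using K_add[OF K_scale] cb by simp
qed (simp add: K_zero)

lemma K_relation:
  assumes "set a \<subseteq> gens m 0" "set b \<subseteq> gens m 0" "x \<in> gens m 0" "y \<in> gens m 0"
  shows "lincomb ([(1, a @ x # y # b), (-1, a @ y # x # b)] @
           map (\<lambda>(c, \<beta>). (- c, a @ \<beta> # b)) (brk x y)) \<in> K"
proof -
  have "fmul (mono a) (fmul (relel x y) (mono b)) \<in> K"
    unfolding indker_def by (rule cspan.base) (use assms in blast)
  then show ?thesis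
    by (simp add: relation_lincomb)
qed

lemma K_whittaker_relation:
  assumes "set a \<subseteq> gens m 0" "x \<in> gens m n"
  shows "lincomb [(1, a @ [x]), (- \<psi> x, a)] \<in> K"
proof -
  have "fmul (mono a) (fsub (mono [x]) (smul (\<psi> x) (mono []))) \<in> K"
    unfolding indker_def by (rule cspan.base) (use assms in blast)
  then show ?thesis
    by (simp add: whittaker_relation_lincomb)
qed

lemma K_fmul_mono: "p \<in> K \<Longrightarrow> set a \<subseteq> gens m 0 \<Longrightarrow> fmul (mono a) p \<in> K"
  unfolding indker_def
proof (induction p rule: cspan.induct)
  case zero
  then show ?case by (simp add: fmul_mono_left cspan.zero)
next
  case (base x)
  then show ?case
    by (auto simp: fmul_mono_fmul_mono intro!: cspan.base) (metis Un_subset_iff set_append)+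
next
  case (add x y)
  then show ?case by (simp add: fmul_mono_fadd cspan.add)
next
  case (scale x c)
  then show ?case by (simp add: fmul_mono_smul cspan.scale)
qed

lemma K_prefix: "lincomb ws \<in> K \<Longrightarrow> y \<in> gens m 0 \<Longrightarrow> lincomb (map (\<lambda>(c, w). (c, y # w)) ws) \<in> K"
  using K_fmul_mono[of "lincomb ws" "[y]"] by (simp add: fmul_mono_lincomb)

end

locale whittaker_induction = induced_data +
  assumes n_le_m: "n \<le> m" and whittaker: "whittaker m n \<psi>"
begin

lemma lin_brk_gens: "x \<in> gens m n \<Longrightarrow> y \<in> gens m n \<Longrightarrow> lin \<psi> (brk x y) = 0"
  using whittaker unfolding whittaker_def by blast

lemma psi_I_vanishes: "int (m + n) \<le> t \<Longrightarrow> \<psi> (I t) = 0"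
  using lin_brk_gens[of "H (int m)" "I (t - int m)"] by (simp add: lin_def)

lemma psi_J_vanishes: "int (m + n) \<le> t \<Longrightarrow> \<psi> (J t) = 0"
  using lin_brk_gens[of "H (int m)" "J (t - int m)"] by (simp add: lin_def)

lemma brk_gens_scalar:
  "x \<in> gens m 0 \<Longrightarrow> y \<in> gens m n \<Longrightarrow> (c, b) \<in> set (brk x y) \<union> set (brk y x) \<Longrightarrow>
   b \<in> gens (m + n) n"
  using n_le_m by (cases x; cases y) (auto split: if_splits)

lemma lin_brk_scalar: "z \<in> gens (m + n) n \<Longrightarrow> y \<in> gens m 0 \<Longrightarrow> lin \<psi> (brk z y) = 0"
proof (cases "y \<in> gens m n")
  case True
  assume "z \<in> gens (m + n) n"
  then show ?thesis
    using lin_brk_gens True gens_antimono[of m "m + n" n n] by simp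
next
  case False
  assume z: "z \<in> gens (m + n) n" and y: "y \<in> gens m 0"
  then have "y \<in> Vgens n"
    using gens_0_iff False by blast
  then show ?thesis
    using z by (cases z; cases y) (auto simp: lin_def psi_I_vanishes psi_J_vanishes)
qed

text \<open>Move z to the right through u; each commutator [z, y] is again a generator of
  G^(m+n,n) and is killed by \<psi>.\<close>
lemma K_scalar_gen_word:
  assumes "z \<in> gens (m + n) n" "set u \<subseteq> gens m 0"
  shows "lincomb [(1, z # u), (- \<psi> z, u)] \<in> K"
  using assms
proof (induction u arbitrary: z)
  case Nil
  then show ?case
    using K_whittaker_relation[of "[]" z] gens_antimono[of m "m + n" n n] by simp
next
  case (Cons y u)
  have zn: "z \<in> gens m n"
    using Cons.prems gens_antimono[of m "m + n" n n] by auto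
  have z: "z \<in> gens m 0" and y: "y \<in> gens m 0" and u: "set u \<subseteq> gens m 0"
    using Cons.prems gens_antimono[of m "m + n" 0 n] by auto
  have swap: "lincomb ([(1, z # y # u), (-1, y # z # u)] @ map (\<lambda>(c, \<beta>). (- c, \<beta> # u)) (brk z y)) \<in> K"
    using K_relation[of "[]" u z y] z y u by simp
  have shifted: "lincomb [(1, y # z # u), (- \<psi> z, y # u)] \<in> K"
    using K_prefix[OF Cons.IH[OF Cons.prems(1) u] y] by simp
  have brackets: "(\<lambda>w. \<Sum>(c, \<beta>)\<leftarrow>brk z y. c * lincomb [(1, \<beta> # u), (- \<psi> \<beta>, u)] w) \<in> K"
  proof (rule K_sum_list)
    fix c \<beta> assume "(c, \<beta>) \<in> set (brk z y)"
    then have "\<beta> \<in> gens (m + n) n"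
      using brk_gens_scalar[OF y zn] by blast
    then show "lincomb [(1, \<beta> # u), (- \<psi> \<beta>, u)] \<in> K"
      using Cons.IH u by blast
  qed
  have "lincomb [(1, z # y # u), (- \<psi> z, y # u)] = (\<lambda>w.
      lincomb ([(1, z # y # u), (-1, y # z # u)] @ map (\<lambda>(c, \<beta>). (- c, \<beta> # u)) (brk z y)) w +
      lincomb [(1, y # z # u), (- \<psi> z, y # u)] w +
      (\<Sum>(c, \<beta>)\<leftarrow>brk z y. c * lincomb [(1, \<beta> # u), (- \<psi> \<beta>, u)] w))"
    (is "_ = ?rhs")
  proof (rule ext)
    fix w
    show "lincomb [(1, z # y # u), (- \<psi> z, y # u)] w = ?rhs w"
      using lin_brk_scalar[OF Cons.prems(1) y]
      by (simp add: lincomb_append lincomb_Cons sum_list_diff_lin lincomb_map_neg)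
  qed
  then show ?case
    using K_add[OF K_add[OF swap shifted] brackets] by simp
qed

lemma acts_as_scalar_gen:
  assumes z: "z \<in> gens (m + n) n" and p: "p \<in> talg m"
  shows "acts_as m n \<psi> z (\<psi> z) p"
proof -
  have fin: "finite {w. p w \<noteq> 0}" and words: "\<And>w. p w \<noteq> 0 \<Longrightarrow> set w \<subseteq> gens m 0"
    using p unfolding talg_def by auto
  have "fsub (fmul (mono [z]) p) (smul (\<psi> z) p) =
        (\<lambda>u. \<Sum>w | p w \<noteq> 0. p w * lincomb [(1, z # w), (- \<psi> z, w)] u)"
  proof (rule ext)
    fix u
    have "fsub (fmul (mono [z]) p) (smul (\<psi> z) p) u = fmul (mono [z]) p u - \<psi> z * p u"
      by (simp add: fsub_def smul_def)
    also have "\<dots> = (\<Sum>w | p w \<noteq> 0. p w * mono (z # w) u - \<psi> z * (p w * mono w u))"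
      unfolding sum_subtractf sum_distrib_left[symmetric] fmul_mono_expand[OF fin]
        fun_eq_sum_mono[OF fin, of u] ..
    also have "\<dots> = (\<Sum>w | p w \<noteq> 0. p w * lincomb [(1, z # w), (- \<psi> z, w)] u)"
      by (rule sum.cong) (auto simp: lincomb_Cons algebra_simps)
    finally show "fsub (fmul (mono [z]) p) (smul (\<psi> z) p) u = \<dots>" .
  qed
  also have "\<dots> \<in> K"
    by (rule K_sum) (use fin K_scalar_gen_word z words in auto)
  finally show ?thesis
    unfolding acts_as_def .
qed

end

section \<open>The polynomial model S(V)\<close>

text \<open>An element of S(V) is stored as its coefficient function on monomials, which are
  multisets of variables.\<close>

type_synonym spoly = "gb multiset \<Rightarrow> complex"

definition smono :: "gb multiset \<Rightarrow> spoly" where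
  "smono M = (\<lambda>N. if N = M then 1 else 0)"

definition vmul :: "gb \<Rightarrow> spoly \<Rightarrow> spoly" where
  "vmul x f = (\<lambda>N. if x \<in># N then f (N - {#x#}) else 0)"

definition pdiff :: "gb \<Rightarrow> spoly \<Rightarrow> spoly" where
  "pdiff v f = (\<lambda>N. of_nat (count N v + 1) * f (add_mset v N))"

definition bracket_der :: "(gb \<Rightarrow> complex) \<Rightarrow> nat \<Rightarrow> gb \<Rightarrow> spoly \<Rightarrow> spoly" where
  "bracket_der \<psi> n x f = (\<lambda>N. \<Sum>v\<in>Vgens n. lin \<psi> (brk x v) * pdiff v f N)"

definition rho :: "(gb \<Rightarrow> complex) \<Rightarrow> nat \<Rightarrow> gb \<Rightarrow> spoly \<Rightarrow> spoly" where
  "rho \<psi> n x f = (if x \<in> Vgens n then vmul x f else (\<lambda>N. \<psi> x * f N + bracket_der \<psi> n x f N))"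

definition rho_word :: "(gb \<Rightarrow> complex) \<Rightarrow> nat \<Rightarrow> gb list \<Rightarrow> spoly \<Rightarrow> spoly" where
  "rho_word \<psi> n w = foldr (rho \<psi> n) w"

lemma rho_word_simps [simp]:
  "rho_word \<psi> n [] f = f"
  "rho_word \<psi> n (x # w) f = rho \<psi> n x (rho_word \<psi> n w f)"
  by (simp_all add: rho_word_def)

lemma rho_word_append: "rho_word \<psi> n (a @ b) f = rho_word \<psi> n a (rho_word \<psi> n b f)"
  by (simp add: rho_word_def)

definition clinear_op :: "(spoly \<Rightarrow> spoly) \<Rightarrow> bool" where
  "clinear_op T \<longleftrightarrow> (\<forall>f g. T (\<lambda>N. f N + g N) = (\<lambda>N. T f N + T g N)) \<and>
     (\<forall>c f. T (\<lambda>N. c * f N) = (\<lambda>N. c * T f N))"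

context
  fixes T assumes T: "clinear_op T"
begin

lemma clinear_op_add: "T (\<lambda>N. f N + g N) N = T f N + T g N"
  using T unfolding clinear_op_def by metis

lemma clinear_op_scale: "T (\<lambda>N. c * f N) N = c * T f N"
  using T unfolding clinear_op_def by metis

lemma clinear_op_zero: "T (\<lambda>_. 0) N = 0"
  using clinear_op_scale[of 0 "\<lambda>_. 0"] by simp

lemma clinear_op_diff: "T (\<lambda>N. f N - g N) N = T f N - T g N"
  using clinear_op_add[of f "\<lambda>N. (-1) * g N"] clinear_op_scale[of "-1" g] by simp

lemma clinear_op_sum: "T (\<lambda>N. \<Sum>i\<in>A. c i * g i N) N = (\<Sum>i\<in>A. c i * T (g i) N)"
proof (induction A rule: infinite_finite_induct)
  case (insert i A)
  then show ?case
    using clinear_op_add[of "\<lambda>N. c i * g i N"] by (simp add: clinear_op_scale)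
qed (simp_all add: clinear_op_zero)

lemma clinear_op_sum_list:
  "T (\<lambda>N. \<Sum>(c, \<beta>)\<leftarrow>xs. c * h \<beta> N) N = (\<Sum>(c, \<beta>)\<leftarrow>xs. c * T (h \<beta>) N)"
proof (induction xs)
  case (Cons cb xs)
  then show ?case
    using clinear_op_add[of "\<lambda>N. fst cb * h (snd cb) N"] by (simp add: clinear_op_scale case_prod_unfold)
qed (simp add: clinear_op_zero)

end

lemma clinear_op_id: "clinear_op (\<lambda>f. f)"
  by (simp add: clinear_op_def)

lemma clinear_op_comp: "clinear_op S \<Longrightarrow> clinear_op T \<Longrightarrow> clinear_op (\<lambda>f. S (T f))"
  unfolding clinear_op_def by simp

lemma clinear_vmul: "clinear_op (vmul x)"
  by (simp add: clinear_op_def vmul_def fun_eq_iff)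

lemma clinear_pdiff: "clinear_op (pdiff v)"
  by (simp add: clinear_op_def pdiff_def fun_eq_iff algebra_simps)

lemma clinear_bracket_der: "clinear_op (bracket_der \<psi> n x)"
  by (simp add: clinear_op_def bracket_der_def fun_eq_iff clinear_op_add[OF clinear_pdiff]
      clinear_op_scale[OF clinear_pdiff] algebra_simps sum.distrib sum_distrib_left)

lemma clinear_rho: "clinear_op (rho \<psi> n x)"
  by (simp add: clinear_op_def rho_def fun_eq_iff clinear_op_add[OF clinear_vmul]
      clinear_op_scale[OF clinear_vmul] clinear_op_add[OF clinear_bracket_der]
      clinear_op_scale[OF clinear_bracket_der] algebra_simps)

lemma clinear_rho_word: "clinear_op (rho_word \<psi> n w)"
  by (induction w) (simp_all add: rho_word_def clinear_op_id clinear_op_comp clinear_rho)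

lemma pdiff_vmul: "pdiff v (vmul x f) N = vmul x (pdiff v f) N + (if v = x then f N else 0)"
proof (cases "v = x")
  case True
  then show ?thesis
    by (cases "x \<in># N") (auto simp: pdiff_def vmul_def algebra_simps count_eq_zero_iff)
next
  case False
  then show ?thesis
    by (auto simp: pdiff_def vmul_def)
qed

lemma vmul_commute: "vmul x (vmul y f) = vmul y (vmul x f)"
  by (rule ext) (auto simp: vmul_def in_diff_count diff_right_commute add_mset_commute)

lemma pdiff_commute: "pdiff v (pdiff w f) = pdiff w (pdiff v f)"
  by (rule ext) (auto simp: pdiff_def add_mset_commute)

lemma bracket_der_commute: "bracket_der \<psi> n x (bracket_der \<psi> n y f) = bracket_der \<psi> n y (bracket_der \<psi> n x f)"
proof (rule ext)
  fix N
  have "bracket_der \<psi> n x (bracket_der \<psi> n y f) N =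
        (\<Sum>v\<in>Vgens n. \<Sum>w\<in>Vgens n. lin \<psi> (brk x v) * lin \<psi> (brk y w) * pdiff v (pdiff w f) N)"
    unfolding bracket_der_def[of _ _ x]
    by (simp add: bracket_der_def clinear_op_sum[OF clinear_pdiff] sum_distrib_left mult.assoc)
  also have "\<dots> = (\<Sum>w\<in>Vgens n. \<Sum>v\<in>Vgens n. lin \<psi> (brk x v) * lin \<psi> (brk y w) * pdiff w (pdiff v f) N)"
    by (subst sum.swap) (simp add: pdiff_commute)
  also have "\<dots> = bracket_der \<psi> n y (bracket_der \<psi> n x f) N"
    unfolding bracket_der_def[of _ _ y]
    by (simp add: bracket_der_def clinear_op_sum[OF clinear_pdiff] sum_distrib_left mult.assoc
        mult.left_commute)
  finally show "bracket_der \<psi> n x (bracket_der \<psi> n y f) N = bracket_der \<psi> n y (bracket_der \<psi> n x f) N" .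
qed

lemma rho_commutator_Vgens:
  assumes x: "x \<in> Vgens n" and y: "y \<notin> Vgens n"
  shows "rho \<psi> n x (rho \<psi> n y f) N - rho \<psi> n y (rho \<psi> n x f) N = lin \<psi> (brk x y) * f N"
proof -
  have "bracket_der \<psi> n y (vmul x f) N =
        (\<Sum>v\<in>Vgens n. lin \<psi> (brk y v) * vmul x (pdiff v f) N) +
        (\<Sum>v\<in>Vgens n. lin \<psi> (brk y v) * (if v = x then f N else 0))"
    by (simp add: bracket_der_def pdiff_vmul distrib_left sum.distrib)
  also have "\<dots> = vmul x (bracket_der \<psi> n y f) N + lin \<psi> (brk y x) * f N"
    using x by (simp add: bracket_der_def clinear_op_sum[OF clinear_vmul] if_distrib[of "\<lambda>t. _ * t"]
        cong: if_cong)
  finally show ?thesis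
    using x y lin_brk_antisym[of \<psi> x y]
    by (simp add: rho_def clinear_op_add[OF clinear_vmul] clinear_op_scale[OF clinear_vmul])
qed

lemma rho_commute_non_Vgens:
  assumes "x \<notin> Vgens n" "y \<notin> Vgens n"
  shows "rho \<psi> n x (rho \<psi> n y f) = rho \<psi> n y (rho \<psi> n x f)"
  using assms
  by (simp add: rho_def fun_eq_iff clinear_op_add[OF clinear_bracket_der]
      clinear_op_scale[OF clinear_bracket_der] bracket_der_commute[of \<psi> n x y] algebra_simps)

context whittaker_induction
begin

lemma rho_scalar: "b \<in> gens (m + n) n \<Longrightarrow> rho \<psi> n b f = (\<lambda>N. \<psi> b * f N)"
  using lin_brk_scalar[of b] Vgens_subset_gens[of _ n m] gens_0_iff[of b m n]
    gens_antimono[of m "m + n" 0 n b] gens_antimono[of m "m + n" n n b]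
  by (simp add: rho_def bracket_der_def)

lemma sum_list_rho_scalar:
  "(\<And>c b. (c, b) \<in> set xs \<Longrightarrow> b \<in> gens (m + n) n) \<Longrightarrow>
   (\<Sum>(c, b)\<leftarrow>xs. c * rho \<psi> n b f N) = lin \<psi> xs * f N"
proof (induction xs)
  case (Cons cb xs)
  then have "snd cb \<in> gens (m + n) n"
    by (metis list.set_intros(1) prod.collapse)
  moreover have "(\<Sum>(c, b)\<leftarrow>xs. c * rho \<psi> n b f N) = lin \<psi> xs * f N"
    by (intro Cons.IH) (auto intro: Cons.prems)
  ultimately show ?case
    by (simp add: rho_scalar lin_def case_prod_unfold algebra_simps)
qed (simp add: lin_def)

lemma rho_commutator:
  assumes x: "x \<in> gens m 0" and y: "y \<in> gens m 0"
  shows "rho \<psi> n x (rho \<psi> n y f) N - rho \<psi> n y (rho \<psi> n x f) N =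
         (\<Sum>(c, b)\<leftarrow>brk x y. c * rho \<psi> n b f N)"
proof -
  have scalar: "(\<Sum>(c, b)\<leftarrow>brk x y. c * rho \<psi> n b f N) = lin \<psi> (brk x y) * f N"
    if "x \<in> gens m n \<or> y \<in> gens m n"
    using that brk_gens_scalar[OF x] brk_gens_scalar[OF y] by (intro sum_list_rho_scalar) blast
  consider "x \<in> Vgens n" "y \<in> Vgens n" | "x \<in> Vgens n" "y \<in> gens m n"
    | "x \<in> gens m n" "y \<in> Vgens n" | "x \<in> gens m n" "y \<in> gens m n"
    using gens_0_iff x y by blast
  then show ?thesis
  proof cases
    case 1
    then show ?thesis
      by (simp add: rho_def vmul_commute brk_Vgens)
  next
    case 2
    then show ?thesis
      using rho_commutator_Vgens[of x n y] scalar gens_0_iff y by simp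
  next
    case 3
    then show ?thesis
      using rho_commutator_Vgens[of y n x \<psi> f N] scalar gens_0_iff x lin_brk_antisym[of \<psi> y x]
      by (simp add: algebra_simps)
  next
    case 4
    then show ?thesis
      using rho_commute_non_Vgens[of x n y] scalar lin_brk_gens gens_0_iff x y by simp
  qed
qed

lemma rho_smono_empty: "x \<in> gens m n \<Longrightarrow> rho \<psi> n x (smono {#}) = (\<lambda>N. \<psi> x * smono {#} N)"
  using gens_0_iff[of x m n] gens_antimono[of m m 0 n x]
  by (simp add: rho_def bracket_der_def pdiff_def smono_def)

end

text \<open>p \<cdot> 1 in S(V), that is, the image of p in the induced module.\<close>
definition act_one :: "(gb \<Rightarrow> complex) \<Rightarrow> nat \<Rightarrow> fa \<Rightarrow> spoly" where
  "act_one \<psi> n p = (\<lambda>N. \<Sum>w | p w \<noteq> 0. p w * rho_word \<psi> n w (smono {#}) N)"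

lemma act_one_superset:
  "finite A \<Longrightarrow> {w. p w \<noteq> 0} \<subseteq> A \<Longrightarrow> act_one \<psi> n p N = (\<Sum>w\<in>A. p w * rho_word \<psi> n w (smono {#}) N)"
  unfolding act_one_def by (rule sum.mono_neutral_left) auto

lemma act_one_add:
  assumes "finite {w. p w \<noteq> 0}" "finite {w. q w \<noteq> 0}"
  shows "act_one \<psi> n (\<lambda>u. p u + q u) N = act_one \<psi> n p N + act_one \<psi> n q N"
proof -
  let ?A = "{w. p w \<noteq> 0} \<union> {w. q w \<noteq> 0}"
  have "act_one \<psi> n (\<lambda>u. p u + q u) N = (\<Sum>w\<in>?A. (p w + q w) * rho_word \<psi> n w (smono {#}) N)"
    by (rule act_one_superset) (use assms in auto)
  also have "\<dots> = act_one \<psi> n p N + act_one \<psi> n q N"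
    using act_one_superset[of ?A p] act_one_superset[of ?A q] assms
    by (simp add: distrib_right sum.distrib)
  finally show ?thesis .
qed

lemma act_one_scale: "act_one \<psi> n (\<lambda>u. c * p u) N = c * act_one \<psi> n p N"
  by (cases "c = 0") (simp_all add: act_one_def sum_distrib_left mult.assoc)

lemma act_one_mono: "act_one \<psi> n (mono w) N = rho_word \<psi> n w (smono {#}) N"
  using act_one_superset[of "{w}" "mono w"] by (simp add: mono_def)

lemma act_one_lincomb:
  "act_one \<psi> n (lincomb ws) N = (\<Sum>(c, w)\<leftarrow>ws. c * rho_word \<psi> n w (smono {#}) N)"
proof (induction ws)
  case Nil
  then show ?case by (simp add: act_one_def)
next
  case (Cons cw ws)
  obtain c w where cw: "cw = (c, w)" by force
  have "act_one \<psi> n (lincomb (cw # ws)) N = act_one \<psi> n (\<lambda>u. c * mono w u) N + act_one \<psi> n (lincomb ws) N"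
    unfolding cw lincomb_Cons
    by (rule act_one_add) (auto intro: finite_support_scale finite_support_mono finite_support_lincomb)
  then show ?case
    using Cons by (simp add: cw act_one_scale act_one_mono)
qed

context whittaker_induction
begin

lemma act_one_relation:
  assumes "x \<in> gens m 0" "y \<in> gens m 0"
  shows "act_one \<psi> n (lincomb ([(1, a @ x # y # b), (-1, a @ y # x # b)] @
           map (\<lambda>(c, \<beta>). (- c, a @ \<beta> # b)) (brk x y))) N = 0"
proof -
  define g where "g = rho_word \<psi> n b (smono {#})"
  have "rho_word \<psi> n a (\<lambda>N. rho \<psi> n x (rho \<psi> n y g) N - rho \<psi> n y (rho \<psi> n x g) N -
          (\<Sum>(c, \<beta>)\<leftarrow>brk x y. c * rho \<psi> n \<beta> g N)) N = 0"
    using rho_commutator[OF assms] by (simp add: clinear_op_zero[OF clinear_rho_word])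
  then show ?thesis
    unfolding act_one_lincomb map_append sum_list_append sum_list_map_neg
    by (simp add: clinear_op_diff[OF clinear_rho_word]
        clinear_op_sum_list[OF clinear_rho_word] rho_word_append g_def)
qed

lemma act_one_whittaker_relation:
  assumes "x \<in> gens m n"
  shows "act_one \<psi> n (lincomb [(1, a @ [x]), (- \<psi> x, a)]) N = 0"
  using rho_smono_empty[OF assms]
  by (simp add: act_one_lincomb rho_word_append clinear_op_scale[OF clinear_rho_word])

lemma act_one_K: "p \<in> K \<Longrightarrow> finite {u. p u \<noteq> 0} \<and> act_one \<psi> n p = (\<lambda>_. 0)"
  unfolding indker_def
proof (induction p rule: cspan.induct)
  case zero
  then show ?case by (simp add: act_one_def)
next
  case (base p)
  then show ?case
  proof
    assume "p \<in> {fmul (mono a) (fmul (relel x y) (mono b)) | a b x y.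
      set a \<subseteq> gens m 0 \<and> set b \<subseteq> gens m 0 \<and> x \<in> gens m 0 \<and> y \<in> gens m 0}"
    then obtain a b x y where "p = fmul (mono a) (fmul (relel x y) (mono b))"
      and "x \<in> gens m 0" "y \<in> gens m 0"
      by blast
    then show ?thesis
      unfolding relation_lincomb using act_one_relation finite_support_lincomb by blast
  next
    assume "p \<in> {fmul (mono a) (fsub (mono [x]) (smul (\<psi> x) (mono []))) | a x.
      set a \<subseteq> gens m 0 \<and> x \<in> gens m n}"
    then obtain a x where "p = fmul (mono a) (fsub (mono [x]) (smul (\<psi> x) (mono [])))"
      and "x \<in> gens m n"
      by blast
    then show ?thesis
      unfolding whittaker_relation_lincomb using act_one_whittaker_relation finite_support_lincomb
      by blast
  qed
next
  case (add p q)
  then show ?case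
    by (simp add: fadd_def act_one_add finite_support_add)
next
  case (scale p c)
  then show ?case
    by (simp add: smul_def act_one_scale finite_support_scale)
qed

lemma K_ne_talg: "K \<noteq> talg m"
proof -
  have "mono [] \<in> talg m"
    by (auto simp: talg_def mono_def)
  moreover have "act_one \<psi> n (mono []) {#} = 1"
    by (simp add: act_one_mono smono_def)
  ultimately show ?thesis
    using act_one_K by force
qed

end

definition Vpoly :: "nat \<Rightarrow> spoly \<Rightarrow> bool" where
  "Vpoly n f \<longleftrightarrow> finite {N. f N \<noteq> 0} \<and> (\<forall>N. f N \<noteq> 0 \<longrightarrow> set_mset N \<subseteq> Vgens n)"

lemma Vpoly_smono: "set_mset M \<subseteq> Vgens n \<Longrightarrow> Vpoly n (smono M)"
  by (auto simp: Vpoly_def smono_def)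

lemma Vpoly_add:
  assumes "Vpoly n f" "Vpoly n g"
  shows "Vpoly n (\<lambda>N. f N + g N)"
proof -
  have "f N \<noteq> 0 \<or> g N \<noteq> 0" if "f N + g N \<noteq> 0" for N
    using that by auto
  then show ?thesis
    using assms finite_support_add[of f g] unfolding Vpoly_def by blast
qed

lemma Vpoly_scale: "Vpoly n f \<Longrightarrow> Vpoly n (\<lambda>N. c * f N)"
  unfolding Vpoly_def using finite_support_scale[of f c] by auto

lemma Vpoly_sum: "finite A \<Longrightarrow> (\<And>i. i \<in> A \<Longrightarrow> Vpoly n (g i)) \<Longrightarrow> Vpoly n (\<lambda>N. \<Sum>i\<in>A. c i * g i N)"
proof (induction A rule: finite_induct)
  case (insert i A)
  then show ?case
    using Vpoly_add[OF Vpoly_scale[of n "g i" "c i"]] by simp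
qed (simp add: Vpoly_def)

lemma Vpoly_pdiff:
  assumes "Vpoly n f"
  shows "Vpoly n (pdiff v f)"
proof -
  have "{N. pdiff v f N \<noteq> 0} \<subseteq> (\<lambda>N. N - {#v#}) ` {N. f N \<noteq> 0}"
    by (auto simp: pdiff_def intro!: image_eqI[of _ _ "add_mset v _"])
  moreover have "set_mset N \<subseteq> Vgens n" if "pdiff v f N \<noteq> 0" for N
    using that assms unfolding Vpoly_def pdiff_def by fastforce
  ultimately show ?thesis
    using assms unfolding Vpoly_def by (auto intro: finite_subset)
qed

lemma Vpoly_vmul:
  assumes "Vpoly n f" "x \<in> Vgens n"
  shows "Vpoly n (vmul x f)"
proof -
  have "{N. vmul x f N \<noteq> 0} \<subseteq> add_mset x ` {N. f N \<noteq> 0}"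
    by (auto simp: vmul_def split: if_splits intro!: image_eqI[of _ _ "_ - {#x#}"])
  moreover have "set_mset N \<subseteq> Vgens n" if "vmul x f N \<noteq> 0" for N
  proof -
    have "x \<in># N" "set_mset (N - {#x#}) \<subseteq> Vgens n"
      using that assms unfolding Vpoly_def vmul_def by (auto split: if_splits)
    then show ?thesis
      using assms(2) by (metis insert_DiffM insert_subset set_mset_add_mset_insert)
  qed
  ultimately show ?thesis
    using assms unfolding Vpoly_def by (auto intro: finite_subset)
qed

lemma Vpoly_rho: "Vpoly n f \<Longrightarrow> Vpoly n (rho \<psi> n x f)"
  unfolding rho_def bracket_der_def
  by (auto intro!: Vpoly_vmul Vpoly_add Vpoly_scale Vpoly_sum Vpoly_pdiff)

lemma Vpoly_rho_word: "Vpoly n f \<Longrightarrow> Vpoly n (rho_word \<psi> n w f)"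
  by (induction w) (simp_all add: Vpoly_rho)

lemma Vpoly_act_one: "finite {w. p w \<noteq> 0} \<Longrightarrow> Vpoly n (act_one \<psi> n p)"
  unfolding act_one_def by (auto intro!: Vpoly_sum Vpoly_rho_word Vpoly_smono)

lemma vmul_smono: "vmul x (smono M) = smono (add_mset x M)"
  by (rule ext) (auto simp: vmul_def smono_def)

lemma spoly_eq_sum_smono: "finite {N. f N \<noteq> 0} \<Longrightarrow> f N = (\<Sum>M | f M \<noteq> 0. f M * smono M N)"
  by (simp add: smono_def if_distrib[of "\<lambda>t. _ * t"] cong: if_cong)

definition word_of :: "gb multiset \<Rightarrow> gb list" where
  "word_of M = (SOME w. mset w = M)"

lemma mset_word_of [simp]: "mset (word_of M) = M"
  unfolding word_of_def by (rule someI_ex) (rule ex_mset)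

lemma set_word_of [simp]: "set (word_of M) = set_mset M"
  by (metis mset_word_of set_mset_mset)

lemma word_of_empty [simp]: "word_of {#} = []"
  using mset_word_of[of "{#}"] by (simp del: mset_word_of)

text \<open>Embeds S(V) into T(G^(m,0)) by fixing one ordering of each monomial.\<close>
definition lift :: "spoly \<Rightarrow> fa" where
  "lift f = (\<lambda>u. if u = word_of (mset u) then f (mset u) else 0)"

lemma lift_smono: "lift (smono M) = mono (word_of M)"
  by (rule ext) (auto simp: lift_def smono_def mono_def)

lemma lift_add: "lift (\<lambda>N. f N + g N) = (\<lambda>u. lift f u + lift g u)"
  by (simp add: lift_def fun_eq_iff)

lemma lift_scale: "lift (\<lambda>N. c * f N) = (\<lambda>u. c * lift f u)"
  by (simp add: lift_def fun_eq_iff)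

lemma lift_lincomb2: "lift (\<lambda>N. a * f N + b * g N) = (\<lambda>u. a * lift f u + b * lift g u)"
  by (simp add: lift_def fun_eq_iff)

lemma lift_sum: "lift (\<lambda>N. \<Sum>i\<in>A. c i * g i N) u = (\<Sum>i\<in>A. c i * lift (g i) u)"
  by (simp add: lift_def)

section \<open>Straightening: every word is congruent to a lifted polynomial\<close>

context whittaker_induction
begin

lemma K_move_front:
  assumes "set a \<subseteq> Vgens n" "x \<in> Vgens n" "set b \<subseteq> Vgens n"
  shows "lincomb [(1, a @ x # b), (-1, x # a @ b)] \<in> K"
  using assms(1)
proof (induction a)
  case Nil
  then show ?case
    using K_zero by (simp add: lincomb_Cons)
next
  case (Cons y a)
  have y: "y \<in> Vgens n" and a: "set a \<subseteq> Vgens n"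
    using Cons.prems by auto
  have "lincomb [(1, y # a @ x # b), (-1, y # x # a @ b)] \<in> K"
    using K_prefix[OF Cons.IH[OF a] Vgens_subset_gens[OF y]] by simp
  moreover have "set (a @ b) \<subseteq> gens m 0"
    using a assms(3) Vgens_subset_gens by auto
  then have "lincomb [(1, y # x # a @ b), (-1, x # y # a @ b)] \<in> K"
    using K_relation[of "[]" "a @ b" y x] brk_Vgens[OF y assms(2)] Vgens_subset_gens y assms(2)
    by simp
  ultimately show ?case
    using K_add by (fastforce simp: lincomb_Cons)
qed

lemma K_perm: "set u \<subseteq> Vgens n \<Longrightarrow> mset u = mset u' \<Longrightarrow> lincomb [(1, u), (-1, u')] \<in> K"
proof (induction u arbitrary: u')
  case Nil
  then show ?case
    using K_zero by (simp add: lincomb_Cons)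
next
  case (Cons x u)
  obtain a b where u': "u' = a @ x # b"
    using Cons.prems(2) by (metis list.set_intros(1) set_mset_mset split_list)
  have x: "x \<in> Vgens n" and u: "set u \<subseteq> Vgens n" and ab: "mset u = mset (a @ b)"
    using Cons.prems u' by auto
  then have "set (a @ b) \<subseteq> Vgens n"
    by (metis set_mset_mset)
  then have "lincomb [(1, x # u), (-1, x # a @ b)] \<in> K"
    and "lincomb [(1, a @ x # b), (-1, x # a @ b)] \<in> K"
    using K_prefix[OF Cons.IH[OF u ab] Vgens_subset_gens[OF x]] K_move_front[of a x b] x by auto
  then show ?case
    using K_diff by (fastforce simp: u' lincomb_Cons)
qed

lemma K_lift_rho_linear:
  assumes f: "Vpoly n f"
    and smono: "\<And>M. set_mset M \<subseteq> Vgens n \<Longrightarrow> fsub (mono (x # word_of M)) (lift (rho \<psi> n x (smono M))) \<in> K"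
  shows "fsub (fmul (mono [x]) (lift f)) (lift (rho \<psi> n x f)) \<in> K"
proof -
  define A where "A = {N. f N \<noteq> 0}"
  have fin: "finite A" and AV: "\<And>M. M \<in> A \<Longrightarrow> set_mset M \<subseteq> Vgens n"
    using f unfolding Vpoly_def A_def by auto
  have f_eq: "f = (\<lambda>N. \<Sum>M\<in>A. f M * smono M N)"
    using spoly_eq_sum_smono fin unfolding A_def by blast
  have "lift f u = (\<Sum>M\<in>A. f M * mono (word_of M) u)" for u
    by (subst f_eq) (simp add: lift_sum lift_smono)
  then have mul: "fmul (mono [x]) (lift f) u = (\<Sum>M\<in>A. f M * mono (x # word_of M) u)" for u
    by (cases u) simp_all
  have "rho \<psi> n x f = (\<lambda>N. \<Sum>M\<in>A. f M * rho \<psi> n x (smono M) N)"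
    by (subst f_eq) (rule ext, rule clinear_op_sum[OF clinear_rho])
  then have rho: "lift (rho \<psi> n x f) u = (\<Sum>M\<in>A. f M * lift (rho \<psi> n x (smono M)) u)" for u
    by (simp add: lift_sum)
  have "fsub (fmul (mono [x]) (lift f)) (lift (rho \<psi> n x f)) =
        (\<lambda>u. \<Sum>M\<in>A. f M * fsub (mono (x # word_of M)) (lift (rho \<psi> n x (smono M))) u)"
    by (rule ext) (simp add: fsub_def mul rho sum_subtractf algebra_simps)
  also have "\<dots> \<in> K"
    by (rule K_sum[OF fin]) (use smono AV in blast)
  finally show ?thesis .
qed

lemma K_lift_vmul:
  assumes x: "x \<in> Vgens n" and f: "Vpoly n f"
  shows "fsub (fmul (mono [x]) (lift f)) (lift (rho \<psi> n x f)) \<in> K"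
proof (rule K_lift_rho_linear[OF f])
  fix M assume "set_mset M \<subseteq> Vgens n"
  then have "lincomb [(1, x # word_of M), (-1, word_of (add_mset x M))] \<in> K"
    using x by (intro K_perm) auto
  then show "fsub (mono (x # word_of M)) (lift (rho \<psi> n x (smono M))) \<in> K"
    using x by (simp add: rho_def vmul_smono lift_smono fsub_def lincomb_Cons)
qed

text \<open>x y u = y x u + [x, y] u, where [x, y] acts on u by the scalar \<psi>([x, y]), and y x u
  is handled by the induction hypothesis and the previous lemma.\<close>
lemma K_lift_rho_gens_Cons:
  assumes x: "x \<in> gens m n" and y: "y \<in> Vgens n" and u: "set u \<subseteq> Vgens n"
    and IH: "fsub (mono (x # u)) (lift (rho \<psi> n x (smono (mset u)))) \<in> K"
  shows "fsub (mono (x # y # u)) (lift (rho \<psi> n x (smono (mset (y # u))))) \<in> K"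
proof -
  have xV: "x \<notin> Vgens n" and xg: "x \<in> gens m 0" and yg: "y \<in> gens m 0" and ug: "set u \<subseteq> gens m 0"
    using x gens_antimono[of m m 0 n x] gens_0_iff[of x m n] Vgens_subset_gens y u by auto
  define g where "g = rho \<psi> n x (smono (mset u))"
  define c where "c = lin \<psi> (brk x y)"
  define swap where
    "swap = lincomb ([(1, x # y # u), (-1, y # x # u)] @ map (\<lambda>(c, \<beta>). (- c, \<beta> # u)) (brk x y))"
  define brackets where
    "brackets = (\<lambda>w. \<Sum>(c, \<beta>)\<leftarrow>brk x y. c * lincomb [(1, \<beta> # u), (- \<psi> \<beta>, u)] w)"
  define shifted where "shifted = fmul (mono [y]) (fsub (mono (x # u)) (lift g))"
  define moved where "moved = fsub (fmul (mono [y]) (lift g)) (lift (rho \<psi> n y g))"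
  define sorted where "sorted = lincomb [(1, u), (-1, word_of (mset u))]"
  have "swap \<in> K"
    unfolding swap_def using K_relation[of "[]" u x y] xg yg ug by simp
  moreover have "brackets \<in> K"
    unfolding brackets_def using brk_gens_scalar[OF yg x]
    by (intro K_sum_list K_scalar_gen_word ug) blast
  moreover have "shifted \<in> K"
    unfolding shifted_def g_def using K_fmul_mono[OF IH, of "[y]"] yg by simp
  moreover have "moved \<in> K"
    unfolding moved_def g_def using u by (intro K_lift_vmul y Vpoly_rho Vpoly_smono) simp
  moreover have "sorted \<in> K"
    unfolding sorted_def using u by (intro K_perm) auto
  moreover have "fsub (mono (x # y # u)) (lift (rho \<psi> n x (smono (mset (y # u))))) =
      (\<lambda>w. swap w + brackets w + shifted w + moved w + c * sorted w)"
  proof (rule ext)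
    fix w
    have "rho \<psi> n x (smono (add_mset y (mset u))) = (\<lambda>N. rho \<psi> n y g N + c * smono (mset u) N)"
      using rho_commutator_Vgens[OF y xV, of \<psi> "smono (mset u)"] lin_brk_antisym[of \<psi> y x] y
      unfolding g_def c_def by (simp add: rho_def vmul_smono fun_eq_iff algebra_simps)
    then have commute: "lift (rho \<psi> n x (smono (add_mset y (mset u)))) w =
        lift (rho \<psi> n y g) w + c * mono (word_of (mset u)) w"
      by (simp add: lift_add lift_scale lift_smono)
    have brackets_eq: "brackets w = (\<Sum>(c, \<beta>)\<leftarrow>brk x y. c * mono (\<beta> # u) w) - c * mono u w"
      unfolding brackets_def by (simp add: lincomb_Cons sum_list_diff_lin c_def)
    have shifted_eq: "shifted w = mono (y # x # u) w - fmul (mono [y]) (lift g) w"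
      unfolding shifted_def by (cases w) (simp_all add: fsub_def)
    show "fsub (mono (x # y # u)) (lift (rho \<psi> n x (smono (mset (y # u))))) w =
        swap w + brackets w + shifted w + moved w + c * sorted w"
      unfolding fsub_def mset.simps commute brackets_eq shifted_eq
      by (simp add: swap_def moved_def sorted_def fsub_def lincomb_append lincomb_Cons
          lincomb_map_neg algebra_simps)
  qed
  ultimately show ?thesis
    using K_add K_scale by simp
qed

lemma K_lift_rho_gens:
  assumes x: "x \<in> gens m n"
  shows "set u \<subseteq> Vgens n \<Longrightarrow> fsub (mono (x # u)) (lift (rho \<psi> n x (smono (mset u)))) \<in> K"
proof (induction u)
  case Nil
  have "fsub (mono [x]) (lift (rho \<psi> n x (smono {#}))) = lincomb [(1, [] @ [x]), (- \<psi> x, [])]"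
    by (simp add: rho_smono_empty[OF x] lift_scale lift_smono fsub_def lincomb_Cons fun_eq_iff)
  then show ?case
    using K_whittaker_relation[of "[]" x] x by simp
next
  case (Cons y u)
  then show ?case
    using K_lift_rho_gens_Cons[OF x] by simp
qed

lemma K_lift_rho:
  assumes x: "x \<in> gens m 0" and f: "Vpoly n f"
  shows "fsub (fmul (mono [x]) (lift f)) (lift (rho \<psi> n x f)) \<in> K"
proof (cases "x \<in> Vgens n")
  case True
  then show ?thesis
    using K_lift_vmul f by blast
next
  case False
  then have "x \<in> gens m n"
    using gens_0_iff x by blast
  then show ?thesis
    using K_lift_rho_gens[of x "word_of _"] by (intro K_lift_rho_linear[OF f]) simp
qed

lemma K_lift_rho_word:
  "set w \<subseteq> gens m 0 \<Longrightarrow> fsub (mono w) (lift (rho_word \<psi> n w (smono {#}))) \<in> K"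
proof (induction w)
  case Nil
  then show ?case
    using K_zero by (simp add: lift_smono fsub_def)
next
  case (Cons x w)
  have "fmul (mono [x]) (fsub (mono w) (lift (rho_word \<psi> n w (smono {#})))) \<in> K"
    using K_fmul_mono[OF Cons.IH] Cons.prems by simp
  moreover have "fsub (fmul (mono [x]) (lift (rho_word \<psi> n w (smono {#}))))
      (lift (rho_word \<psi> n (x # w) (smono {#}))) \<in> K"
    using K_lift_rho Cons.prems Vpoly_rho_word Vpoly_smono by simp
  moreover have "fsub (mono (x # w)) (lift (rho_word \<psi> n (x # w) (smono {#}))) = (\<lambda>v.
      fmul (mono [x]) (fsub (mono w) (lift (rho_word \<psi> n w (smono {#})))) v +
      fsub (fmul (mono [x]) (lift (rho_word \<psi> n w (smono {#})))) (lift (rho_word \<psi> n (x # w) (smono {#}))) v)"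
    by (rule ext, case_tac v) (simp_all add: fsub_def)
  ultimately show ?case
    using K_add by simp
qed

lemma K_lift_act_one:
  assumes p: "p \<in> talg m"
  shows "fsub p (lift (act_one \<psi> n p)) \<in> K"
proof -
  have fin: "finite {w. p w \<noteq> 0}" and words: "\<And>w. p w \<noteq> 0 \<Longrightarrow> set w \<subseteq> gens m 0"
    using p unfolding talg_def by auto
  have "fsub p (lift (act_one \<psi> n p)) =
        (\<lambda>u. \<Sum>w | p w \<noteq> 0. p w * fsub (mono w) (lift (rho_word \<psi> n w (smono {#}))) u)"
  proof (rule ext)
    fix u
    have "fsub p (lift (act_one \<psi> n p)) u =
          (\<Sum>w | p w \<noteq> 0. p w * mono w u) - (\<Sum>w | p w \<noteq> 0. p w * lift (rho_word \<psi> n w (smono {#})) u)"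
      unfolding fsub_def act_one_def lift_sum fun_eq_sum_mono[OF fin, of u, symmetric] ..
    then show "fsub p (lift (act_one \<psi> n p)) u =
        (\<Sum>w | p w \<noteq> 0. p w * fsub (mono w) (lift (rho_word \<psi> n w (smono {#}))) u)"
      by (simp add: fsub_def sum_subtractf right_diff_distrib)
  qed
  also have "\<dots> \<in> K"
    by (rule K_sum) (use fin K_lift_rho_word words in auto)
  finally show ?thesis .
qed

lemma act_one_nonzero:
  assumes "p \<in> talg m" "p \<notin> K"
  obtains N where "act_one \<psi> n p N \<noteq> 0"
proof -
  have "act_one \<psi> n p \<noteq> (\<lambda>_. 0)"
  proof
    assume "act_one \<psi> n p = (\<lambda>_. 0)"
    then have "fsub p (lift (act_one \<psi> n p)) = p"
      by (simp add: lift_def fsub_def)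
    then show False
      using K_lift_act_one[OF assms(1)] assms(2) by simp
  qed
  then show ?thesis
    using that by blast
qed

end

section \<open>Irreducibility\<close>

definition gen_index :: "gb \<Rightarrow> int" where
  "gen_index b = (case b of I t \<Rightarrow> t | J t \<Rightarrow> t | _ \<Rightarrow> 0)"

lemma gen_index_simps [simp]: "gen_index (I t) = t" "gen_index (J t) = t"
  by (simp_all add: gen_index_def)

lemma sum_Vgens_single:
  fixes F :: "gb \<Rightarrow> 'a::comm_monoid_add"
  assumes j: "0 \<le> j" "j < int n"
    and others: "\<And>t. 0 \<le> t \<Longrightarrow> t < int n \<Longrightarrow> t \<noteq> j \<Longrightarrow> F (I t) = 0 \<and> F (J t) = 0"
  shows "(\<Sum>v\<in>Vgens n. F v) = F (I j) + F (J j)"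
proof -
  have "(\<Sum>v\<in>Vgens n. F v) = (\<Sum>t\<in>{0..<int n}. F (I t)) + (\<Sum>t\<in>{0..<int n}. F (J t))"
  proof -
    have "(\<Sum>v\<in>Vgens n. F v) = sum F (I ` {0..<int n}) + sum F (J ` {0..<int n})"
      unfolding Vgens_def by (rule sum.union_disjoint) auto
    then show ?thesis
      by (simp add: sum.reindex inj_on_def)
  qed
  also have "\<dots> = F (I j) + F (J j)"
  proof -
    have single: "(\<Sum>t\<in>{0..<int n}. G t) = G j" if "\<And>t. t \<in> {0..<int n} - {j} \<Longrightarrow> G t = 0" for G :: "int \<Rightarrow> 'a"
      using sum.remove[of "{0..<int n}" j G] sum.neutral[of "{0..<int n} - {j}" G] j that by simp
    have "(\<Sum>t\<in>{0..<int n}. F (I t)) = F (I j)" "(\<Sum>t\<in>{0..<int n}. F (J t)) = F (J j)"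
      by (rule single, use others in auto)+
    then show ?thesis
      by simp
  qed
  finally show ?thesis .
qed

definition support_degree :: "spoly \<Rightarrow> nat" where
  "support_degree f = (\<Sum>N | f N \<noteq> 0. size N)"

lemma support_degree_pdiff:
  assumes fin: "finite {N. f N \<noteq> 0}" and N: "f N \<noteq> 0" "v \<in># N"
  shows "support_degree (pdiff v f) < support_degree f"
proof -
  define B where "B = {N. f N \<noteq> 0 \<and> v \<in># N}"
  have finB: "finite B"
    using fin unfolding B_def by (rule finite_subset[rotated]) auto
  have "{N. pdiff v f N \<noteq> 0} \<subseteq> (\<lambda>N. N - {#v#}) ` B"
    unfolding B_def by (auto simp: pdiff_def intro!: image_eqI[of _ _ "add_mset v _"])
  then have "support_degree (pdiff v f) \<le> (\<Sum>N\<in>(\<lambda>N. N - {#v#}) ` B. size N)"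
    unfolding support_degree_def by (rule sum_mono2[OF finite_imageI[OF finB]]) auto
  also have "\<dots> \<le> (\<Sum>N\<in>B. size (N - {#v#}))"
    using sum_image_le[OF finB, of size "\<lambda>N. N - {#v#}"] by (simp add: comp_def)
  also have "\<dots> < (\<Sum>N\<in>B. size N)"
  proof (rule sum_strict_mono[OF finB])
    show "B \<noteq> {}"
      using N unfolding B_def by blast
  qed (auto simp: B_def size_Diff1_less)
  also have "\<dots> \<le> support_degree f"
    unfolding support_degree_def B_def by (rule sum_mono2[OF fin]) auto
  finally show ?thesis .
qed

lemma exists_minimal_index:
  assumes f: "Vpoly n f" and N: "f N \<noteq> 0" "N \<noteq> {#}"
  obtains j v N' where "0 \<le> j" "j < int n" "v = I j \<or> v = J j" "f N' \<noteq> 0" "v \<in># N'"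
    "\<And>N v. f N \<noteq> 0 \<Longrightarrow> v \<in># N \<Longrightarrow> j \<le> gen_index v"
proof -
  define ixs where "ixs = (\<Union>N\<in>{N. f N \<noteq> 0}. gen_index ` set_mset N)"
  have fin: "finite ixs"
    using f unfolding ixs_def Vpoly_def by auto
  obtain w where "w \<in># N"
    using N(2) by (meson multiset_nonemptyE)
  then have "gen_index w \<in> ixs"
    using N(1) unfolding ixs_def by blast
  then have "Min ixs \<in> ixs"
    using fin by (intro Min_in) auto
  then obtain N' where N'f: "f N' \<noteq> 0" and "Min ixs \<in> gen_index ` set_mset N'"
    unfolding ixs_def by blast
  then obtain v where N': "f N' \<noteq> 0" "v \<in># N'" and v: "gen_index v = Min ixs"
    by auto
  then have "v \<in> Vgens n"
    using f unfolding Vpoly_def by blast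
  then obtain t where t: "v = I t \<or> v = J t" "0 \<le> t" "t < int n"
    by (cases v) auto
  have "t = Min ixs"
    using v t(1) by auto
  moreover have "Min ixs \<le> gen_index w" if "f M \<noteq> 0" "w \<in># M" for M w
    using that fin unfolding ixs_def by (intro Min_le) auto
  ultimately show ?thesis
    using that[of t v N'] t N' by blast
qed

locale nondegenerate_whittaker = whittaker_induction +
  assumes nondegenerate: "\<psi> (I (int (m + n) - 1)) * \<psi> (J (int (m + n) - 1)) \<noteq> 0"
begin

text \<open>By the choice of a, \<psi>([H_a, v]) and \<psi>([L_a, v]) vanish for the variables v of index
  greater than j, and the derivatives of f in the variables of index less than j vanish.\<close>
lemma bracket_der_H_L:
  assumes j: "0 \<le> j" "j < int n"
    and low: "\<And>N v. f N \<noteq> 0 \<Longrightarrow> v \<in># N \<Longrightarrow> j \<le> gen_index v"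
  defines "a \<equiv> int (m + n) - 1 - j"
  shows "bracket_der \<psi> n (H a) f N =
           \<psi> (I (int (m + n) - 1)) * pdiff (I j) f N - \<psi> (J (int (m + n) - 1)) * pdiff (J j) f N"
    and "bracket_der \<psi> n (L a) f N =
           of_int (j - a) * (\<psi> (I (int (m + n) - 1)) * pdiff (I j) f N + \<psi> (J (int (m + n) - 1)) * pdiff (J j) f N)"
proof -
  have low_zero: "pdiff v f N = 0" if "gen_index v < j" for v
    using low[of "add_mset v N" v] that by (force simp: pdiff_def)
  have high_zero: "\<psi> (I (a + t)) = 0" "\<psi> (J (a + t)) = 0" if "j < t" for t
    using that psi_I_vanishes psi_J_vanishes unfolding a_def by auto
  have aj: "a + j = int (m + n) - 1"
    unfolding a_def by simp
  have single: "(\<Sum>v\<in>Vgens n. lin \<psi> (brk x v) * pdiff v f N) =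
      lin \<psi> (brk x (I j)) * pdiff (I j) f N + lin \<psi> (brk x (J j)) * pdiff (J j) f N"
    if "x = H a \<or> x = L a" for x
  proof (rule sum_Vgens_single[OF j])
    fix t assume "t \<noteq> j"
    then consider "t < j" | "j < t"
      by linarith
    then show "lin \<psi> (brk x (I t)) * pdiff (I t) f N = 0 \<and> lin \<psi> (brk x (J t)) * pdiff (J t) f N = 0"
      by cases (use that low_zero high_zero in \<open>auto simp: lin_def\<close>)
  qed
  show "bracket_der \<psi> n (H a) f N =
      \<psi> (I (int (m + n) - 1)) * pdiff (I j) f N - \<psi> (J (int (m + n) - 1)) * pdiff (J j) f N"
    unfolding bracket_der_def single[OF disjI1[OF refl]] by (simp add: lin_def aj)
  show "bracket_der \<psi> n (L a) f N =
      of_int (j - a) * (\<psi> (I (int (m + n) - 1)) * pdiff (I j) f N + \<psi> (J (int (m + n) - 1)) * pdiff (J j) f N)"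
    unfolding bracket_der_def single[OF disjI2[OF refl]] by (simp add: lin_def aj algebra_simps)
qed

end

locale induced_submodule = nondegenerate_whittaker +
  fixes S :: "fa set"
  assumes K_subset: "K \<subseteq> S" and S_subset: "S \<subseteq> talg m"
    and S_fadd: "\<And>p q. p \<in> S \<Longrightarrow> q \<in> S \<Longrightarrow> fadd p q \<in> S"
    and S_smul: "\<And>p c. p \<in> S \<Longrightarrow> smul c p \<in> S"
    and S_fmul: "\<And>x p. x \<in> gens m 0 \<Longrightarrow> p \<in> S \<Longrightarrow> fmul (mono [x]) p \<in> S"
begin

lemma S_lincomb2: "p \<in> S \<Longrightarrow> q \<in> S \<Longrightarrow> (\<lambda>u. a * p u + b * q u) \<in> S"
  using S_fadd S_smul unfolding fadd_def smul_def by blast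

lemma S_sum: "finite A \<Longrightarrow> (\<And>i. i \<in> A \<Longrightarrow> f i \<in> S) \<Longrightarrow> (\<lambda>u. \<Sum>i\<in>A. c i * f i u) \<in> S"
proof (induction A rule: finite_induct)
  case empty
  then show ?case
    using K_zero K_subset by auto
next
  case (insert i A)
  then show ?case
    using S_lincomb2[of "f i" _ "c i" 1] by simp
qed

lemma S_of_K: "p \<in> S \<Longrightarrow> fsub p q \<in> K \<Longrightarrow> q \<in> S"
  using S_lincomb2[of p "fsub p q" 1 "-1"] K_subset by (auto simp: fsub_def)

lemma S_lift_rho: "x \<in> gens m 0 \<Longrightarrow> Vpoly n f \<Longrightarrow> lift f \<in> S \<Longrightarrow> lift (rho \<psi> n x f) \<in> S"
  using S_of_K[OF S_fmul K_lift_rho] by blast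

lemma S_lift_bracket_der:
  assumes "x \<in> gens m 0" "x \<notin> Vgens n" "Vpoly n f" "lift f \<in> S"
  shows "lift (bracket_der \<psi> n x f) \<in> S"
proof -
  have "(\<lambda>u. 1 * lift (rho \<psi> n x f) u + (- \<psi> x) * lift f u) \<in> S"
    using assms by (intro S_lincomb2 S_lift_rho)
  then show ?thesis
    using assms(2) by (simp add: rho_def lift_add lift_scale)
qed

text \<open>Solving the equations of the previous lemma for the derivatives; this is where
  the nondegeneracy of \<psi> and n \<le> m (so that j \<noteq> a) are used.\<close>
lemma S_lift_pdiff:
  assumes f: "Vpoly n f" "lift f \<in> S" and j: "0 \<le> j" "j < int n"
    and low: "\<And>N v. f N \<noteq> 0 \<Longrightarrow> v \<in># N \<Longrightarrow> j \<le> gen_index v"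
  shows "lift (pdiff (I j) f) \<in> S" and "lift (pdiff (J j) f) \<in> S"
proof -
  define a where "a = int (m + n) - 1 - j"
  define \<alpha> where "\<alpha> = \<psi> (I (int (m + n) - 1))"
  define \<beta> where "\<beta> = \<psi> (J (int (m + n) - 1))"
  define c :: complex where "c = of_int (j - a)"
  have "\<alpha> \<noteq> 0" "\<beta> \<noteq> 0"
    using nondegenerate unfolding \<alpha>_def \<beta>_def by auto
  moreover have "j - a < 0"
    using j n_le_m unfolding a_def by simp
  then have "c \<noteq> 0"
    unfolding c_def by simp
  moreover have DH: "lift (bracket_der \<psi> n (H a) f) \<in> S" and DL: "lift (bracket_der \<psi> n (L a) f) \<in> S"
    using j f unfolding a_def by (auto intro!: S_lift_bracket_der)
  moreover note eqs = bracket_der_H_L[OF j low, folded a_def \<alpha>_def \<beta>_def c_def]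
  ultimately have "pdiff (I j) f = (\<lambda>N. (1 / (2 * \<alpha>)) * bracket_der \<psi> n (H a) f N +
      (1 / (2 * \<alpha> * c)) * bracket_der \<psi> n (L a) f N)"
    and "pdiff (J j) f = (\<lambda>N. (- 1 / (2 * \<beta>)) * bracket_der \<psi> n (H a) f N +
      (1 / (2 * \<beta> * c)) * bracket_der \<psi> n (L a) f N)"
    by (simp_all add: eqs field_simps fun_eq_iff)
  then show "lift (pdiff (I j) f) \<in> S" and "lift (pdiff (J j) f) \<in> S"
    using S_lincomb2[OF DH DL] by (simp_all only: lift_lincomb2)
qed

lemma mono_Nil_in_S: "Vpoly n f \<Longrightarrow> lift f \<in> S \<Longrightarrow> f N \<noteq> 0 \<Longrightarrow> mono [] \<in> S"
proof (induction "support_degree f" arbitrary: f N rule: less_induct)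
  case less
  show ?case
  proof (cases "\<exists>N'. f N' \<noteq> 0 \<and> N' \<noteq> {#}")
    case False
    then have "lift f = (\<lambda>u. f {#} * mono [] u)" and "f {#} \<noteq> 0"
      using less.prems(3) by (auto simp: lift_def mono_def fun_eq_iff)
    then show ?thesis
      using S_smul[OF less.prems(2), of "1 / f {#}"] by (simp add: smul_def)
  next
    case True
    then obtain N1 where "f N1 \<noteq> 0" "N1 \<noteq> {#}"
      by blast
    then obtain j v N' where j: "0 \<le> j" "j < int n" and v: "v = I j \<or> v = J j"
      and N': "f N' \<noteq> 0" "v \<in># N'" and low: "\<And>N v. f N \<noteq> 0 \<Longrightarrow> v \<in># N \<Longrightarrow> j \<le> gen_index v"
      using exists_minimal_index[OF less.prems(1)] by metis
    have "support_degree (pdiff v f) < support_degree f"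
      using less.prems(1) N' by (intro support_degree_pdiff) (auto simp: Vpoly_def)
    moreover have "Vpoly n (pdiff v f)" "lift (pdiff v f) \<in> S"
      using S_lift_pdiff[OF less.prems(1,2) j low] v less.prems(1) by (auto intro: Vpoly_pdiff)
    moreover have "pdiff v f (N' - {#v#}) \<noteq> 0"
      using N' by (simp add: pdiff_def)
    ultimately show ?thesis
      using less.hyps by blast
  qed
qed

lemma talg_subset_S:
  assumes "mono [] \<in> S"
  shows "talg m \<subseteq> S"
proof
  have mono: "mono w \<in> S" if "set w \<subseteq> gens m 0" for w
    using that
  proof (induction w)
    case (Cons x w)
    then show ?case
      using S_fmul[of x "mono w"] by (simp add: fmul_mono_mono)
  qed (use assms in simp)
  fix q assume "q \<in> talg m"
  then have fin: "finite {w. q w \<noteq> 0}" and "\<And>w. q w \<noteq> 0 \<Longrightarrow> set w \<subseteq> gens m 0"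
    unfolding talg_def by auto
  then have "(\<lambda>u. \<Sum>w | q w \<noteq> 0. q w * mono w u) \<in> S"
    by (intro S_sum mono) auto
  moreover have "(\<lambda>u. \<Sum>w | q w \<noteq> 0. q w * mono w u) = q"
    by (rule ext) (rule fun_eq_sum_mono[OF fin, symmetric])
  ultimately show "q \<in> S"
    by simp
qed

lemma submodule_eq_talg:
  assumes "S \<noteq> K"
  shows "S = talg m"
proof -
  obtain p where p: "p \<in> S" "p \<notin> K"
    using assms K_subset by blast
  then have talg: "p \<in> talg m"
    using S_subset by blast
  then have "Vpoly n (act_one \<psi> n p)"
    unfolding talg_def by (intro Vpoly_act_one) blast
  moreover have "lift (act_one \<psi> n p) \<in> S"
    using S_of_K[OF p(1) K_lift_act_one[OF talg]] .
  moreover obtain N where "act_one \<psi> n p N \<noteq> 0"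
    using act_one_nonzero[OF talg p(2)] .
  ultimately have "mono [] \<in> S"
    by (rule mono_Nil_in_S)
  then show ?thesis
    using talg_subset_S S_subset by blast
qed

end

context nondegenerate_whittaker
begin

lemma induced_module_irreducible: "induced_irreducible m n \<psi>"
  unfolding induced_irreducible_def
proof (intro conjI allI impI)
  show "K \<noteq> talg m"
    by (rule K_ne_talg)
next
  fix S
  assume "K \<subseteq> S \<and> S \<subseteq> talg m \<and> (\<forall>p\<in>S. \<forall>q\<in>S. fadd p q \<in> S) \<and> (\<forall>p\<in>S. \<forall>c. smul c p \<in> S) \<and>
    (\<forall>x\<in>gens m 0. \<forall>p\<in>S. fmul (mono [x]) p \<in> S)"
  then interpret induced_submodule m n \<psi> S
    by unfold_locales blast+
  show "S = K \<or> S = talg m"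
    using submodule_eq_talg by blast
qed

end

theorem proposition3p1:
  fixes m n :: nat and \<psi> :: "gb \<Rightarrow> complex"
  assumes "0 < m" and "n \<le> m"
    and "whittaker m n \<psi>"
    and "\<psi> (I (int (m + n) - 1)) * \<psi> (J (int (m + n) - 1)) \<noteq> 0"
  shows "induced_irreducible m n \<psi> \<and>
    (\<forall>p\<in>talg m. \<forall>i::nat.
        acts_as m n \<psi> (L (int (m + n + i))) (\<psi> (L (int (m + n + i)))) p \<and>
        acts_as m n \<psi> (H (int (m + n + i))) (\<psi> (H (int (m + n + i)))) p \<and>
        acts_as m n \<psi> (I (int (n + i))) (\<psi> (I (int (n + i)))) p \<and>
        acts_as m n \<psi> (J (int (n + i))) (\<psi> (J (int (n + i)))) p)"
proof -
  interpret nondegenerate_whittaker m n \<psi>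
    using assms(2-4) by unfold_locales
  show ?thesis
    using induced_module_irreducible acts_as_scalar_gen by simp
qed

end
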